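(* For every $1\leq p\leq\infty$, the class $\Pi^{\widehat{\mathcal{B}}}_p$ (whose component for each complex Banach space $X$ is $\Pi^{\widehat{\mathcal{B}}}_p(\mathbb{D},X)$), together with the function $\pi^{\mathcal{B}}_p$, is an injective Banach normalized Bloch ideal.
   Context: $\mathbb{D}=\{z\in\mathbb{C}:|z|<1\}$. For a complex Banach space $X$, $\mathcal{H}(\mathbb{D},X)$ is the space of holomorphic maps $\mathbb{D}\to X$; $p_{\mathcal{B}}(f)=\sup_{z\in\mathbb{D}}(1-|z|^2)\|f'(z)\|$; $\widehat{\mathcal{B}}(\mathbb{D},X)$ is the Banach space (norm $p_{\mathcal{B}}$) of $f\in\mathcal{H}(\mathbb{D},X)$ with $p_{\mathcal{B}}(f)<\infty$ and $f(0)=0$; $\widehat{\mathcal{B}}(\mathbb{D})=\widehat{\mathcal{B}}(\mathbb{D},\mathbb{C})$ with closed unit ball $B_{\widehat{\mathcal{B}}(\mathbb{D})}$. For $1\leq p<\infty$, $f\in\mathcal{H}(\mathbb{D},X)$ is $p$-summing Bloch if there is $c\geq0$ with $\left(\sum_{i=1}^n|\lambda_i|^p\|f'(z_i)\|^p\right)^{1/p}\leq c\sup_{g\in B_{\widehat{\mathcal{B}}(\mathbb{D})}}\left(\sum_{i=1}^n|\lambda_i|^p|g'(z_i)|^p\right)^{1/p}$ for all $n\in\mathbb{N}$, $\lambda_i\in\mathbb{C}$, $z_i\in\mathbb{D}$; for $p=\infty$ the condition is $\max_i|\lambda_i|\|f'(z_i)\|\leq c\sup_{g\in B_{\widehat{\mathcal{B}}(\mathbb{D})}}\max_i|\lambda_i||g'(z_i)|$.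 The least such $c$ is $\pi^{\mathcal{B}}_p(f)$. $\Pi^{\widehat{\mathcal{B}}}_p(\mathbb{D},X)$ is the space of $p$-summing Bloch maps $f:\mathbb{D}\to X$ with $f(0)=0$. A normalized Bloch ideal is an assignment $\mathcal{I}$ to each complex Banach space $X$ of a set $\mathcal{I}(\mathbb{D},X)\subseteq\widehat{\mathcal{B}}(\mathbb{D},X)$ such that: (I1) $\mathcal{I}(\mathbb{D},X)$ is a linear subspace; (I2) for every $g\in\widehat{\mathcal{B}}(\mathbb{D})$ and $x\in X$, the map $g\cdot x: z\mapsto g(z)x$ lies in $\mathcal{I}(\mathbb{D},X)$; (I3) if $f\in\mathcal{I}(\mathbb{D},X)$, $h:\mathbb{D}\to\mathbb{D}$ is holomorphic with $h(0)=0$, and $T:X\to Y$ is a bounded linear operator into a complex Banach space $Y$, then $T\circ f\circ h\in\mathcal{I}(\mathbb{D},Y)$. It is a Banach (resp. normed) normalized Bloch ideal with respect to a function $\|\cdot\|_{\mathcal{I}}$ if for every $X$: (N1) $(\mathcal{I}(\mathbb{D},X),\|\cdot\|_{\mathcal{I}})$ is a Banach (resp. normed) space with $p_{\mathcal{B}}(f)\leq\|f\|_{\mathcal{I}}$; (N2) $\|g\cdot x\|_{\mathcal{I}}=p_{\mathcal{B}}(g)\|x\|$ for all $g\in\widehat{\mathcal{B}}(\mathbb{D})$, $x\in X$; (N3) for $h,f,T$ as in (I3), $\|T\circ f\circ h\|_{\mathcal{I}}\leq\|T\|\|f\|_{\mathcal{I}}$. It is injective if for every $f\in\widehat{\mathcal{B}}(\mathbb{D},X)$,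 every complex Banach space $Y$ and every linear isometric embedding $\iota:X\to Y$ with $\iota\circ f\in\mathcal{I}(\mathbb{D},Y)$, one has $f\in\mathcal{I}(\mathbb{D},X)$ and $\|f\|_{\mathcal{I}}=\|\iota\circ f\|_{\mathcal{I}}$. *)

theory Defs
  imports "HOL-Complex_Analysis.Complex_Analysis"
begin

text \<open>The distribution has no class of complex normed vector spaces, so we add
  one: a real Banach space with a complex scalar multiplication extending the real
  one and satisfying the vector space and norm axioms.\<close>

class complex_banach = banach +
  fixes cscale :: "complex \<Rightarrow> 'a \<Rightarrow> 'a"  (infixr \<open>*\<^sub>C\<close> 75)
  assumes cscale_add_right: "a *\<^sub>C (x + y) = a *\<^sub>C x + a *\<^sub>C y"
    and cscale_add_left: "(a + b) *\<^sub>C x = a *\<^sub>C x + b *\<^sub>C x"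
    and cscale_cscale: "a *\<^sub>C (b *\<^sub>C x) = (a * b) *\<^sub>C x"
    and cscale_of_real: "complex_of_real r *\<^sub>C x = r *\<^sub>R x"
    and norm_cscale: "norm (a *\<^sub>C x) = cmod a * norm x"

instantiation complex :: complex_banach
begin
definition cscale_complex :: "complex \<Rightarrow> complex \<Rightarrow> complex" where
  "cscale_complex a x = a * x"
instance
  by standard (auto simp: cscale_complex_def algebra_simps norm_mult scaleR_conv_of_real)
end

abbreviation disc :: "complex set" where "disc \<equiv> ball 0 1"

definition has_cderiv :: "(complex \<Rightarrow> 'a::complex_banach) \<Rightarrow> 'a \<Rightarrow> complex \<Rightarrow> bool" where
  "has_cderiv f d z \<longleftrightarrow> (f has_derivative (\<lambda>h. h *\<^sub>C d)) (at z)"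

definition vholo :: "(complex \<Rightarrow> 'a::complex_banach) \<Rightarrow> bool" where
  "vholo f \<longleftrightarrow> (\<forall>z\<in>disc. \<exists>d. has_cderiv f d z)"

definition cderiv :: "(complex \<Rightarrow> 'a::complex_banach) \<Rightarrow> complex \<Rightarrow> 'a" where
  "cderiv f z = (SOME d. has_cderiv f d z)"

definition bloch_seminorm :: "(complex \<Rightarrow> 'a::complex_banach) \<Rightarrow> real" where
  "bloch_seminorm f = (SUP z\<in>disc. (1 - (cmod z)\<^sup>2) * norm (cderiv f z))"

definition BlochHat :: "(complex \<Rightarrow> 'a::complex_banach) set" where
  "BlochHat = {f. vholo f \<and> f 0 = 0 \<and>
      bdd_above ((\<lambda>z. (1 - (cmod z)\<^sup>2) * norm (cderiv f z)) ` disc)}"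

text \<open>\<open>\<ell>_p\<close>-norm of the finite family \<open>a 0, ..., a (n-1)\<close>; for \<open>p = \<infinity>\<close> the maximum
  (with \<open>0\<close> inserted so that \<open>n = 0\<close> is harmless).\<close>
definition lpn :: "ereal \<Rightarrow> (nat \<Rightarrow> real) \<Rightarrow> nat \<Rightarrow> real" where
  "lpn p a n = (if p = \<infinity> then Max (insert 0 ((\<lambda>i. \<bar>a i\<bar>) ` {..<n}))
                else (\<Sum>i<n. \<bar>a i\<bar> powr real_of_ereal p) powr (1 / real_of_ereal p))"

definition psum_cond :: "ereal \<Rightarrow> (complex \<Rightarrow> 'a::complex_banach) \<Rightarrow> real \<Rightarrow> bool" where
  "psum_cond p f c \<longleftrightarrow>
     (\<forall>n (lam :: nat \<Rightarrow> complex) (zs :: nat \<Rightarrow> complex). (\<forall>i<n. zs i \<in> disc) \<longrightarrow>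
        lpn p (\<lambda>i. cmod (lam i) * norm (cderiv f (zs i))) n
          \<le> c * (SUP g\<in>{g :: complex \<Rightarrow> complex. g \<in> BlochHat \<and> bloch_seminorm g \<le> 1}.
                   lpn p (\<lambda>i. cmod (lam i) * cmod (cderiv g (zs i))) n))"

definition PiB :: "ereal \<Rightarrow> (complex \<Rightarrow> 'a::complex_banach) set" where
  "PiB p = {f. vholo f \<and> f 0 = 0 \<and> (\<exists>c\<ge>0. psum_cond p f c)}"

definition piB :: "ereal \<Rightarrow> (complex \<Rightarrow> 'a::complex_banach) \<Rightarrow> real" where
  "piB p f = Inf {c. c \<ge> 0 \<and> psum_cond p f c}"

text \<open>Maps \<open>\<D> \<rightarrow> X\<close> are represented by total functions \<open>complex \<Rightarrow> X\<close> whose values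
  off the disc are irrelevant; accordingly "\<open>f = 0\<close>" means "\<open>f\<close> vanishes on \<open>\<D>\<close>".\<close>

definition cbounded_linear :: "('a::complex_banach \<Rightarrow> 'b::complex_banach) \<Rightarrow> bool" where
  "cbounded_linear T \<longleftrightarrow> bounded_linear T \<and> (\<forall>a x. T (a *\<^sub>C x) = a *\<^sub>C T x)"

definition banach_bloch_ideal_on ::
  "(complex \<Rightarrow> 'a::complex_banach) set \<Rightarrow> ((complex \<Rightarrow> 'a) \<Rightarrow> real) \<Rightarrow> bool" where
  "banach_bloch_ideal_on I nI \<longleftrightarrow>
     \<comment> \<open>inclusion in \<open>\<B>^(\<D>,X)\<close>\<close>
     I \<subseteq> BlochHat \<and>
     \<comment> \<open>(I1) linear subspace\<close>
     (\<lambda>z. 0) \<in> I \<and> (\<forall>f\<in>I. \<forall>g\<in>I. (\<lambda>z. f z + g z) \<in> I) \<and>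
     (\<forall>a. \<forall>f\<in>I. (\<lambda>z. a *\<^sub>C f z) \<in> I) \<and>
     \<comment> \<open>(I2)\<close>
     (\<forall>g :: complex \<Rightarrow> complex. \<forall>x :: 'a. g \<in> BlochHat \<longrightarrow> (\<lambda>z. g z *\<^sub>C x) \<in> I) \<and>
     \<comment> \<open>(N1) normed space\<close>
     (\<forall>f\<in>I. nI f = 0 \<longleftrightarrow> (\<forall>z\<in>disc. f z = 0)) \<and>
     (\<forall>f\<in>I. \<forall>g\<in>I. nI (\<lambda>z. f z + g z) \<le> nI f + nI g) \<and>
     (\<forall>a. \<forall>f\<in>I. nI (\<lambda>z. a *\<^sub>C f z) = cmod a * nI f) \<and>
     \<comment> \<open>(N1) completeness\<close>
     (\<forall>s :: nat \<Rightarrow> complex \<Rightarrow> 'a. (\<forall>n. s n \<in> I) \<and>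
        (\<forall>e>0. \<exists>N. \<forall>m\<ge>N. \<forall>n\<ge>N. nI (\<lambda>z. s m z - s n z) < e) \<longrightarrow>
        (\<exists>f\<in>I. \<forall>e>0. \<exists>N. \<forall>n\<ge>N. nI (\<lambda>z. s n z - f z) < e)) \<and>
     \<comment> \<open>(N1) domination of the Bloch norm\<close>
     (\<forall>f\<in>I. bloch_seminorm f \<le> nI f) \<and>
     \<comment> \<open>(N2)\<close>
     (\<forall>g :: complex \<Rightarrow> complex. \<forall>x :: 'a. g \<in> BlochHat \<longrightarrow>
        nI (\<lambda>z. g z *\<^sub>C x) = bloch_seminorm g * norm x)"

definition bloch_ideal_compose ::
  "(complex \<Rightarrow> 'a::complex_banach) set \<Rightarrow> ((complex \<Rightarrow> 'a) \<Rightarrow> real) \<Rightarrow>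
   (complex \<Rightarrow> 'b::complex_banach) set \<Rightarrow> ((complex \<Rightarrow> 'b) \<Rightarrow> real) \<Rightarrow> bool" where
  "bloch_ideal_compose IX nX IY nY \<longleftrightarrow>
     (\<forall>f\<in>IX. \<forall>h T. h holomorphic_on disc \<and> h ` disc \<subseteq> disc \<and> h 0 = 0 \<and>
        cbounded_linear (T :: 'a \<Rightarrow> 'b) \<longrightarrow>
        T \<circ> f \<circ> h \<in> IY \<and> nY (T \<circ> f \<circ> h) \<le> onorm T * nX f)"

definition bloch_ideal_injective ::
  "(complex \<Rightarrow> 'a::complex_banach) set \<Rightarrow> ((complex \<Rightarrow> 'a) \<Rightarrow> real) \<Rightarrow>
   (complex \<Rightarrow> 'b::complex_banach) set \<Rightarrow> ((complex \<Rightarrow> 'b) \<Rightarrow> real) \<Rightarrow> bool" where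
  "bloch_ideal_injective IX nX IY nY \<longleftrightarrow>
     (\<forall>f\<in>BlochHat. \<forall>\<iota> :: 'a \<Rightarrow> 'b. cbounded_linear \<iota> \<and> (\<forall>x. norm (\<iota> x) = norm x) \<and>
        \<iota> \<circ> f \<in> IY \<longrightarrow> f \<in> IX \<and> nX f = nY (\<iota> \<circ> f))"

end

(*
  pi_p(f) is the least constant in the summing inequality, and the infimum is attained since
  the inequality is closed in the constant.  Testing it on a single point gives
  (1 - |z|^2) |f'(z)| <= pi_p(f), so pi_p dominates the Bloch norm.  Almost everything else is
  a pointwise comparison of derivatives: |g'| <= k |f'| on the disc implies
  pi_p(g) <= k pi_p(f).  This gives homogeneity, injectivity (an isometry preserves |f'|) and
  the value on rank-one maps g.x (normalise g into the Bloch unit ball), while Minkowski's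
  inequality for finite l_p-sums gives the triangle inequality.  For T o f o h, the
  Schwarz-Pick lemma keeps g o h in the Bloch unit ball, so the right-hand side of the summing
  inequality can only decrease when (lambda_i, z_i) is replaced by (lambda_i h'(z_i), h(z_i)).
  For completeness, a pi_p-Cauchy sequence has derivatives converging locally uniformly, hence
  a holomorphic limit, and the summing inequality survives the limit because each instance
  involves only finitely many points.
*)

theory Submission
  imports Defs
begin

lemma cscale_scaleR_right: "a *\<^sub>C (r *\<^sub>R x) = r *\<^sub>R (a *\<^sub>C (x::'a::complex_banach))"
  by (metis cscale_cscale cscale_of_real mult.commute)

lemma cscale_scaleR_left: "(r *\<^sub>R a) *\<^sub>C x = r *\<^sub>R (a *\<^sub>C (x::'a::complex_banach))"
  by (simp add: scaleR_conv_of_real cscale_of_real[symmetric] cscale_cscale)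

interpretation cscale_left: additive "\<lambda>a. a *\<^sub>C (x::'a::complex_banach)"
  by standard (rule cscale_add_left)

interpretation cscale_right: additive "\<lambda>x::'a::complex_banach. a *\<^sub>C x"
  by standard (rule cscale_add_right)

lemma bounded_linear_cscale_left: "bounded_linear (\<lambda>a. a *\<^sub>C (x::'a::complex_banach))"
  by (rule bounded_linear_intro[where K = "norm x"])
     (auto simp: cscale_add_left cscale_scaleR_left norm_cscale)

lemma bounded_linear_cscale_right: "bounded_linear (\<lambda>x::'a::complex_banach. a *\<^sub>C x)"
  by (rule bounded_linear_intro[where K = "cmod a"])
     (auto simp: cscale_add_right cscale_scaleR_right norm_cscale mult.commute)

lemma cscale_one [simp]: "1 *\<^sub>C x = (x::'a::complex_banach)"
  using cscale_of_real[of 1 x] by simp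

lemma cscale_complex [simp]: "a *\<^sub>C (b::complex) = a * b"
  by (simp add: cscale_complex_def)

lemma cbounded_linear_cscale: "cbounded_linear (\<lambda>x::'a::complex_banach. a *\<^sub>C x)"
  unfolding cbounded_linear_def
  by (simp add: bounded_linear_cscale_right cscale_cscale mult.commute)

lemma cbounded_linear_cscale_left: "cbounded_linear (\<lambda>a. a *\<^sub>C (x::'a::complex_banach))"
  unfolding cbounded_linear_def by (simp add: bounded_linear_cscale_left cscale_cscale)

section \<open>Complex derivatives of vector-valued maps\<close>

lemma has_cderiv_unique: "has_cderiv f d z \<Longrightarrow> has_cderiv f e z \<Longrightarrow> d = e"
proof -
  assume "has_cderiv f d z" "has_cderiv f e z"
  then have "(\<lambda>h. h *\<^sub>C d) = (\<lambda>h. h *\<^sub>C e)"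
    unfolding has_cderiv_def by (rule has_derivative_unique)
  then show "d = e" by (metis cscale_one)
qed

lemma cderiv_eq: "has_cderiv f d z \<Longrightarrow> cderiv f z = d"
  unfolding cderiv_def by (rule some_equality) (auto dest: has_cderiv_unique)

lemma vholo_has_cderiv:
  assumes "vholo f" "z \<in> disc"
  shows "has_cderiv f (cderiv f z) z"
proof -
  obtain d where "has_cderiv f d z" using assms unfolding vholo_def by blast
  then show ?thesis by (simp add: cderiv_eq)
qed

lemma vholo_cderivI:
  assumes "\<And>z. z \<in> disc \<Longrightarrow> has_cderiv f (d z) z"
  shows "vholo f \<and> (\<forall>z\<in>disc. cderiv f z = d z)"
  using assms cderiv_eq unfolding vholo_def by blast

lemma has_cderiv_const: "has_cderiv (\<lambda>z. c) 0 z"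
  unfolding has_cderiv_def by (simp add: cscale_right.zero)

lemma has_cderiv_add:
  "has_cderiv f d z \<Longrightarrow> has_cderiv g e z \<Longrightarrow> has_cderiv (\<lambda>w. f w + g w) (d + e) z"
  unfolding has_cderiv_def by (drule (1) has_derivative_add) (simp add: cscale_add_right)

lemma has_cderiv_diff:
  "has_cderiv f d z \<Longrightarrow> has_cderiv g e z \<Longrightarrow> has_cderiv (\<lambda>w. f w - g w) (d - e) z"
  unfolding has_cderiv_def by (drule (1) has_derivative_diff) (simp add: cscale_right.diff)

lemma has_cderiv_linear:
  assumes "has_cderiv f d z" "cbounded_linear T"
  shows "has_cderiv (\<lambda>w. T (f w)) (T d) z"
proof -
  have "((\<lambda>w. T (f w)) has_derivative (\<lambda>h. T (h *\<^sub>C d))) (at z)"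
    using bounded_linear.has_derivative assms unfolding has_cderiv_def cbounded_linear_def by blast
  then show ?thesis
    using assms(2) unfolding has_cderiv_def cbounded_linear_def by simp
qed

lemma has_cderiv_comp:
  assumes "(h has_field_derivative h') (at z)" "has_cderiv f d (h z)"
  shows "has_cderiv (\<lambda>w. f (h w)) (h' *\<^sub>C d) z"
  using has_derivative_compose[of h "(*) h'" z UNIV f "\<lambda>k. k *\<^sub>C d"] assms
  unfolding has_cderiv_def has_field_derivative_def by (simp add: cscale_cscale mult.commute)

lemma vholo_const: "vholo (\<lambda>z. c)"
  unfolding vholo_def using has_cderiv_const by blast

lemma cderiv_const: "cderiv (\<lambda>z. c) z = 0"
  by (rule cderiv_eq[OF has_cderiv_const])

lemma
  assumes "vholo f" "vholo g"
  shows vholo_add: "vholo (\<lambda>w. f w + g w)"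
    and cderiv_add: "z \<in> disc \<Longrightarrow> cderiv (\<lambda>w. f w + g w) z = cderiv f z + cderiv g z"
proof -
  have d: "has_cderiv (\<lambda>w. f w + g w) (cderiv f z + cderiv g z) z" if "z \<in> disc" for z
    using has_cderiv_add[OF vholo_has_cderiv[OF assms(1) that] vholo_has_cderiv[OF assms(2) that]] .
  show "vholo (\<lambda>w. f w + g w)" "z \<in> disc \<Longrightarrow> cderiv (\<lambda>w. f w + g w) z = cderiv f z + cderiv g z"
    using vholo_cderivI[OF d] by auto
qed

lemma
  assumes "vholo f" "vholo g"
  shows vholo_diff: "vholo (\<lambda>w. f w - g w)"
    and cderiv_diff: "z \<in> disc \<Longrightarrow> cderiv (\<lambda>w. f w - g w) z = cderiv f z - cderiv g z"
proof -
  have d: "has_cderiv (\<lambda>w. f w - g w) (cderiv f z - cderiv g z) z" if "z \<in> disc" for z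
    using has_cderiv_diff[OF vholo_has_cderiv[OF assms(1) that] vholo_has_cderiv[OF assms(2) that]] .
  show "vholo (\<lambda>w. f w - g w)" "z \<in> disc \<Longrightarrow> cderiv (\<lambda>w. f w - g w) z = cderiv f z - cderiv g z"
    using vholo_cderivI[OF d] by auto
qed

lemma
  assumes "vholo f" "cbounded_linear T"
  shows vholo_linear: "vholo (\<lambda>w. T (f w))"
    and cderiv_linear: "z \<in> disc \<Longrightarrow> cderiv (\<lambda>w. T (f w)) z = T (cderiv f z)"
proof -
  have d: "has_cderiv (\<lambda>w. T (f w)) (T (cderiv f z)) z" if "z \<in> disc" for z
    using has_cderiv_linear[OF vholo_has_cderiv[OF assms(1) that] assms(2)] .
  show "vholo (\<lambda>w. T (f w))" "z \<in> disc \<Longrightarrow> cderiv (\<lambda>w. T (f w)) z = T (cderiv f z)"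
    using vholo_cderivI[OF d] by auto
qed

lemma
  assumes "vholo f"
  shows vholo_cscale: "vholo (\<lambda>w. a *\<^sub>C f w)"
    and cderiv_cscale: "z \<in> disc \<Longrightarrow> cderiv (\<lambda>w. a *\<^sub>C f w) z = a *\<^sub>C cderiv f z"
  using vholo_linear[OF assms cbounded_linear_cscale] cderiv_linear[OF assms cbounded_linear_cscale]
  by blast+

lemma
  assumes "vholo f" "h holomorphic_on disc" "h ` disc \<subseteq> disc"
  shows vholo_comp: "vholo (\<lambda>w. f (h w))"
    and cderiv_comp: "z \<in> disc \<Longrightarrow> cderiv (\<lambda>w. f (h w)) z = deriv h z *\<^sub>C cderiv f (h z)"
proof -
  have d: "has_cderiv (\<lambda>w. f (h w)) (deriv h z *\<^sub>C cderiv f (h z)) z" if "z \<in> disc" for z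
  proof (rule has_cderiv_comp)
    show "(h has_field_derivative deriv h z) (at z)"
      using assms(2) that by (rule holomorphic_derivI[OF _ open_ball])
    show "has_cderiv f (cderiv f (h z)) (h z)"
      using assms(1,3) that by (blast intro: vholo_has_cderiv)
  qed
  show "vholo (\<lambda>w. f (h w))"
    "z \<in> disc \<Longrightarrow> cderiv (\<lambda>w. f (h w)) z = deriv h z *\<^sub>C cderiv f (h z)"
    using vholo_cderivI[OF d] by auto
qed

lemma cderiv_vanishing:
  assumes "\<And>w. w \<in> disc \<Longrightarrow> f w = 0" "z \<in> disc"
  shows "cderiv f z = 0"
proof (rule cderiv_eq)
  show "has_cderiv f 0 z"
    using has_cderiv_const[of 0 z] assms
    unfolding has_cderiv_def by (auto intro: has_derivative_transform_within_open[of _ _ _ _ disc])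
qed

section \<open>Finite \<open>\<ell>\<^sub>p\<close>-norms\<close>

lemma convex_powr_nonneg:
  fixes x y t q :: real
  assumes "1 \<le> q" "0 \<le> x" "0 \<le> y" "0 \<le> t" "t \<le> 1"
  shows "(t * x + (1 - t) * y) powr q \<le> t * x powr q + (1 - t) * y powr q"
proof -
  have scale: "(s * u) powr q \<le> s * u powr q" if "0 \<le> s" "s \<le> 1" "0 \<le> u" for s u :: real
  proof -
    have "s powr q \<le> s powr 1" using that assms(1) by (intro powr_mono') auto
    then show ?thesis using that by (simp add: powr_mult mult_right_mono)
  qed
  consider "x = 0" | "y = 0" | "x > 0" "y > 0" using assms by linarith
  then show ?thesis
  proof cases
    case 3
    show ?thesis
      using convex_onD[OF powr_convex[OF assms(1)], of "1 - t" x y] assms 3 by simp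
  qed (use scale[of "1 - t" y] scale[of t x] assms in simp_all)
qed

lemma sum_powr_add_le:
  fixes a b :: "nat \<Rightarrow> real"
  assumes q: "1 \<le> q" and a: "\<And>i. i < n \<Longrightarrow> 0 \<le> a i" and b: "\<And>i. i < n \<Longrightarrow> 0 \<le> b i"
    and A: "0 < A" "A powr q = (\<Sum>i<n. a i powr q)" and B: "0 < B" "B powr q = (\<Sum>i<n. b i powr q)"
  shows "(\<Sum>i<n. (a i + b i) powr q) \<le> (A + B) powr q"
proof -
  define t where "t = A / (A + B)"
  have t: "0 \<le> t" "t \<le> 1" "1 - t = B / (A + B)"
    unfolding t_def using A B by (auto simp: field_simps)
  have "((a i + b i) / (A + B)) powr q \<le> t * (a i / A) powr q + (1 - t) * (b i / B) powr q"
    if "i < n" for i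
  proof -
    have "(a i + b i) / (A + B) = t * (a i / A) + (1 - t) * (b i / B)"
      using A B unfolding t(3) by (simp add: t_def add_divide_distrib)
    then show ?thesis
      using convex_powr_nonneg[OF q, of "a i / A" "b i / B" t] a[OF that] b[OF that] A B t by simp
  qed
  then have "(\<Sum>i<n. ((a i + b i) / (A + B)) powr q)
        \<le> (\<Sum>i<n. t * (a i / A) powr q + (1 - t) * (b i / B) powr q)"
    by (rule sum_mono) simp
  also have "\<dots> = t * (\<Sum>i<n. a i powr q) / A powr q + (1 - t) * (\<Sum>i<n. b i powr q) / B powr q"
    using a b A B by (simp add: sum.distrib sum_distrib_left sum_divide_distrib powr_divide)
  also have "\<dots> = 1" using A B unfolding A(2)[symmetric] B(2)[symmetric] by simp
  finally show ?thesis
    using a b A B by (simp add: sum_divide_distrib[symmetric] powr_divide divide_le_eq)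
qed

lemma minkowski_sum_powr:
  fixes a b :: "nat \<Rightarrow> real"
  assumes q: "1 \<le> q" and a: "\<And>i. i < n \<Longrightarrow> 0 \<le> a i" and b: "\<And>i. i < n \<Longrightarrow> 0 \<le> b i"
  shows "(\<Sum>i<n. (a i + b i) powr q) powr (1/q)
         \<le> (\<Sum>i<n. a i powr q) powr (1/q) + (\<Sum>i<n. b i powr q) powr (1/q)"
proof -
  define A where "A = (\<Sum>i<n. a i powr q) powr (1/q)"
  define B where "B = (\<Sum>i<n. b i powr q) powr (1/q)"
  have Aq: "A powr q = (\<Sum>i<n. a i powr q)" and Bq: "B powr q = (\<Sum>i<n. b i powr q)"
    unfolding A_def B_def using q by (simp_all add: powr_powr sum_nonneg)
  consider "A = 0" | "B = 0" | "A > 0" "B > 0" unfolding A_def B_def by fastforce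
  then show ?thesis
  proof cases
    case 1
    then have "(\<Sum>i<n. a i powr q) = 0" using Aq by simp
    then have "\<forall>i<n. a i = 0" by (subst (asm) sum_nonneg_eq_0_iff) auto
    then show ?thesis using 1 by (simp add: A_def B_def)
  next
    case 2
    then have "(\<Sum>i<n. b i powr q) = 0" using Bq by simp
    then have "\<forall>i<n. b i = 0" by (subst (asm) sum_nonneg_eq_0_iff) auto
    then show ?thesis using 2 by (simp add: A_def B_def)
  next
    case 3
    have "(\<Sum>i<n. (a i + b i) powr q) powr (1/q) \<le> ((A + B) powr q) powr (1/q)"
      using sum_powr_add_le[OF q a b] 3 Aq Bq a b q by (intro powr_mono2) (auto intro: sum_nonneg)
    also have "\<dots> = A + B" using 3 q by (simp add: powr_powr)
    finally show ?thesis unfolding A_def B_def .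
  qed
qed

lemma real_of_ereal_ge_1: "1 \<le> p \<Longrightarrow> p \<noteq> \<infinity> \<Longrightarrow> 1 \<le> real_of_ereal p"
  by (cases p) auto

lemma lpn_infinity_le_iff: "lpn \<infinity> a n \<le> M \<longleftrightarrow> 0 \<le> M \<and> (\<forall>i<n. \<bar>a i\<bar> \<le> M)"
  unfolding lpn_def by auto

lemma lpn_infinity_ge: "i < n \<Longrightarrow> \<bar>a i\<bar> \<le> lpn \<infinity> a n"
  unfolding lpn_def by simp

lemma lpn_finite:
  "p \<noteq> \<infinity> \<Longrightarrow> lpn p a n = (\<Sum>i<n. \<bar>a i\<bar> powr real_of_ereal p) powr (1 / real_of_ereal p)"
  unfolding lpn_def by simp

lemma lpn_nonneg: "0 \<le> lpn p a n"
  unfolding lpn_def by simp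

lemma lpn_mono:
  assumes p: "1 \<le> p" and le: "\<And>i. i < n \<Longrightarrow> \<bar>a i\<bar> \<le> \<bar>b i\<bar>"
  shows "lpn p a n \<le> lpn p b n"
proof (cases "p = \<infinity>")
  case True
  show ?thesis
    unfolding True lpn_infinity_le_iff
    using lpn_nonneg[of \<infinity> b n] lpn_infinity_ge[of _ n b] le by (auto intro: order_trans)
next
  case False
  then show ?thesis
    unfolding lpn_finite[OF False] using le real_of_ereal_ge_1[OF p False]
    by (intro powr_mono2 sum_mono) (auto intro: sum_nonneg)
qed

lemma lpn_cong: "1 \<le> p \<Longrightarrow> (\<And>i. i < n \<Longrightarrow> \<bar>a i\<bar> = \<bar>b i\<bar>) \<Longrightarrow> lpn p a n = lpn p b n"
  by (intro antisym lpn_mono) auto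

lemma lpn_scale:
  assumes p: "1 \<le> p" and c: "0 \<le> c"
  shows "lpn p (\<lambda>i. c * a i) n = c * lpn p a n"
proof (cases "p = \<infinity>")
  case True
  have "c * Max (insert 0 ((\<lambda>i. \<bar>a i\<bar>) ` {..<n}))
      = Max ((*) c ` insert 0 ((\<lambda>i. \<bar>a i\<bar>) ` {..<n}))"
    using c by (intro mono_Max_commute) (auto intro: monoI mult_left_mono)
  then show ?thesis
    unfolding True lpn_def using c by (simp add: abs_mult image_image)
next
  case False
  define q where "q = real_of_ereal p"
  have q: "1 \<le> q" unfolding q_def using p False by (rule real_of_ereal_ge_1)
  have "(\<Sum>i<n. \<bar>c * a i\<bar> powr q) powr (1/q) = ((c powr q) * (\<Sum>i<n. \<bar>a i\<bar> powr q)) powr (1/q)"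
    using c by (simp add: abs_mult powr_mult sum_distrib_left)
  also have "\<dots> = c * (\<Sum>i<n. \<bar>a i\<bar> powr q) powr (1/q)"
    using c q by (simp add: powr_mult powr_powr sum_nonneg)
  finally show ?thesis unfolding lpn_finite[OF False] q_def .
qed

lemma lpn_single: "1 \<le> p \<Longrightarrow> lpn p a (Suc 0) = \<bar>a 0\<bar>"
  using real_of_ereal_ge_1[of p] by (cases "p = \<infinity>") (simp_all add: lpn_def powr_powr lessThan_Suc)

lemma lpn_zero: "1 \<le> p \<Longrightarrow> (\<And>i. i < n \<Longrightarrow> a i = 0) \<Longrightarrow> lpn p a n = 0"
  using lpn_scale[of p 0 a n] lpn_cong[of p n a "\<lambda>i. 0 * a i"] by simp

lemma lpn_triangle:
  assumes p: "1 \<le> p"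
  shows "lpn p (\<lambda>i. a i + b i) n \<le> lpn p a n + lpn p b n"
proof (cases "p = \<infinity>")
  case True
  show ?thesis
    unfolding True lpn_infinity_le_iff
  proof (intro conjI allI impI)
    fix i assume "i < n"
    then show "\<bar>a i + b i\<bar> \<le> lpn \<infinity> a n + lpn \<infinity> b n"
      using lpn_infinity_ge[of i n a] lpn_infinity_ge[of i n b] abs_triangle_ineq[of "a i" "b i"]
      by linarith
  qed (simp add: add_nonneg_nonneg lpn_nonneg)
next
  case False
  have "lpn p (\<lambda>i. a i + b i) n \<le> lpn p (\<lambda>i. \<bar>a i\<bar> + \<bar>b i\<bar>) n"
    using p by (intro lpn_mono) auto
  also have "\<dots> \<le> lpn p a n + lpn p b n"
    unfolding lpn_finite[OF False]
    using minkowski_sum_powr[OF real_of_ereal_ge_1[OF p False], of n "\<lambda>i. \<bar>a i\<bar>" "\<lambda>i. \<bar>b i\<bar>"] by simp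
  finally show ?thesis .
qed

lemma lpn_le_add_scaled:
  assumes p: "1 \<le> p" and d: "0 \<le> d" and le: "\<And>i. i < n \<Longrightarrow> \<bar>a i\<bar> \<le> \<bar>b i\<bar> + d * \<bar>w i\<bar>"
  shows "lpn p a n \<le> lpn p b n + d * lpn p w n"
proof -
  have "lpn p a n \<le> lpn p (\<lambda>i. \<bar>b i\<bar> + d * \<bar>w i\<bar>) n"
    using le d by (intro lpn_mono[OF p]) auto
  also have "\<dots> \<le> lpn p (\<lambda>i. \<bar>b i\<bar>) n + lpn p (\<lambda>i. d * \<bar>w i\<bar>) n"
    by (rule lpn_triangle[OF p])
  also have "\<dots> = lpn p b n + d * lpn p w n"
    using d lpn_cong[OF p, of n "\<lambda>i. \<bar>b i\<bar>" b] lpn_cong[OF p, of n "\<lambda>i. \<bar>w i\<bar>" w]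
    by (simp add: lpn_scale[OF p])
  finally show ?thesis .
qed

lemma one_minus_norm_sq_pos: "z \<in> disc \<Longrightarrow> 0 < 1 - (cmod z)\<^sup>2"
  by (simp add: abs_square_less_1)

lemma bloch_seminorm_upper:
  "g \<in> BlochHat \<Longrightarrow> z \<in> disc \<Longrightarrow> (1 - (cmod z)\<^sup>2) * norm (cderiv g z) \<le> bloch_seminorm g"
  unfolding bloch_seminorm_def BlochHat_def by (auto intro: cSUP_upper)

lemma bloch_seminorm_nonneg: "g \<in> BlochHat \<Longrightarrow> 0 \<le> bloch_seminorm g"
  using bloch_seminorm_upper[of g 0] by (auto intro: order_trans[OF norm_ge_zero])

lemma
  assumes "vholo g" "g 0 = 0" "\<And>z. z \<in> disc \<Longrightarrow> (1 - (cmod z)\<^sup>2) * norm (cderiv g z) \<le> M"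
  shows BlochHatI: "g \<in> BlochHat"
    and bloch_seminorm_le: "bloch_seminorm g \<le> M"
  using assms unfolding BlochHat_def bloch_seminorm_def
  by (auto intro!: bdd_aboveI2[where M = M] cSUP_least)

abbreviation bloch_ball :: "(complex \<Rightarrow> complex) set" where
  "bloch_ball \<equiv> {g. g \<in> BlochHat \<and> bloch_seminorm g \<le> 1}"

lemma zero_in_bloch_ball: "(\<lambda>z. 0) \<in> bloch_ball"
  using BlochHatI[OF vholo_const, of 0 1] bloch_seminorm_le[OF vholo_const, of 0 1]
  by (simp add: cderiv_const)

lemma bloch_ball_cderiv_le:
  assumes "g \<in> bloch_ball" "z \<in> disc"
  shows "cmod (cderiv g z) \<le> 1 / (1 - (cmod z)\<^sup>2)"
  using bloch_seminorm_upper[of g z] one_minus_norm_sq_pos[of z] assms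
  by (simp add: field_simps)

text \<open>The right-hand side of the \<open>p\<close>-summing inequality: the weak \<open>\<ell>\<^sub>p\<close>-norm of the
  family of functionals \<open>\<lambda>\<^sub>i \<delta>\<^sub>z\<^sub>i\<close> on the Bloch space.\<close>

definition weak_lpn :: "ereal \<Rightarrow> (nat \<Rightarrow> complex) \<Rightarrow> (nat \<Rightarrow> complex) \<Rightarrow> nat \<Rightarrow> real" where
  "weak_lpn p lam zs n = (SUP g\<in>bloch_ball. lpn p (\<lambda>i. cmod (lam i) * cmod (cderiv g (zs i))) n)"

lemma psum_cond_iff:
  "psum_cond p f c \<longleftrightarrow> (\<forall>n lam zs. (\<forall>i<n. zs i \<in> disc) \<longrightarrow>
      lpn p (\<lambda>i. cmod (lam i) * norm (cderiv f (zs i))) n \<le> c * weak_lpn p lam zs n)"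
  unfolding psum_cond_def weak_lpn_def ..

lemma weak_lpn_upper:
  assumes p: "1 \<le> p" and zs: "\<forall>i<n. zs i \<in> disc" and g: "g \<in> bloch_ball"
  shows "lpn p (\<lambda>i. cmod (lam i) * cmod (cderiv g (zs i))) n \<le> weak_lpn p lam zs n"
  unfolding weak_lpn_def
proof (rule cSUP_upper[OF g], rule bdd_aboveI2)
  fix g assume g: "g \<in> bloch_ball"
  show "lpn p (\<lambda>i. cmod (lam i) * cmod (cderiv g (zs i))) n
        \<le> lpn p (\<lambda>i. cmod (lam i) / (1 - (cmod (zs i))\<^sup>2)) n"
  proof (rule lpn_mono[OF p])
    fix i assume "i < n"
    then have "zs i \<in> disc" using zs by blast
    then have "0 < 1 - (cmod (zs i))\<^sup>2"
      and "cmod (lam i) * cmod (cderiv g (zs i)) \<le> cmod (lam i) * (1 / (1 - (cmod (zs i))\<^sup>2))"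
      using mult_left_mono[OF bloch_ball_cderiv_le[OF g], of "zs i" "cmod (lam i)"]
        one_minus_norm_sq_pos by auto
    then show "\<bar>cmod (lam i) * cmod (cderiv g (zs i))\<bar> \<le> \<bar>cmod (lam i) / (1 - (cmod (zs i))\<^sup>2)\<bar>"
      by simp
  qed
qed

lemma weak_lpn_least:
  "(\<And>g. g \<in> bloch_ball \<Longrightarrow> lpn p (\<lambda>i. cmod (lam i) * cmod (cderiv g (zs i))) n \<le> M)
    \<Longrightarrow> weak_lpn p lam zs n \<le> M"
  unfolding weak_lpn_def using zero_in_bloch_ball by (blast intro: cSUP_least)

lemma weak_lpn_nonneg: "1 \<le> p \<Longrightarrow> \<forall>i<n. zs i \<in> disc \<Longrightarrow> 0 \<le> weak_lpn p lam zs n"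
  using weak_lpn_upper[OF _ _ zero_in_bloch_ball, of p n zs lam] lpn_nonneg[of p _ n]
  by (meson order_trans)

lemma weak_lpn_single:
  "1 \<le> p \<Longrightarrow> z \<in> disc \<Longrightarrow> weak_lpn p (\<lambda>i. 1) (\<lambda>i. z) (Suc 0) \<le> 1 / (1 - (cmod z)\<^sup>2)"
  by (rule weak_lpn_least) (simp add: lpn_single bloch_ball_cderiv_le)

lemma lpn_le_weak_lpn:
  assumes p: "1 \<le> p" and zs: "\<forall>i<n. zs i \<in> disc" and g: "g \<in> BlochHat"
  shows "lpn p (\<lambda>i. cmod (lam i) * cmod (cderiv g (zs i))) n \<le> bloch_seminorm g * weak_lpn p lam zs n"
proof (cases "bloch_seminorm g = 0")
  case True
  have "cderiv g z = 0" if "z \<in> disc" for z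
    using bloch_seminorm_upper[OF g that] one_minus_norm_sq_pos[OF that] True
    by (simp add: mult_le_0_iff)
  then show ?thesis using zs True by (simp add: lpn_zero[OF p])
next
  case False
  define s where "s = bloch_seminorm g"
  have s: "0 < s" using False bloch_seminorm_nonneg[OF g] unfolding s_def by simp
  have g_vholo: "vholo g" and g0: "g 0 = 0" using g unfolding BlochHat_def by auto
  define g1 where "g1 z = inverse s *\<^sub>C g z" for z
  have g1_deriv: "cderiv g1 z = inverse s * cderiv g z" if "z \<in> disc" for z
    unfolding g1_def using cderiv_cscale[OF g_vholo that] by simp
  have "g1 \<in> bloch_ball"
  proof -
    have "(1 - (cmod z)\<^sup>2) * norm (cderiv g1 z) \<le> 1" if "z \<in> disc" for z
    proof -
      have "(1 - (cmod z)\<^sup>2) * norm (cderiv g1 z) = (1 - (cmod z)\<^sup>2) * norm (cderiv g z) / s"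
        using s by (simp add: g1_deriv[OF that] norm_mult norm_inverse divide_inverse mult_ac)
      also have "\<dots> \<le> 1"
        using bloch_seminorm_upper[OF g that] s by (simp add: s_def)
      finally show ?thesis .
    qed
    moreover have "vholo g1" unfolding g1_def by (rule vholo_cscale[OF g_vholo])
    moreover have "g1 0 = 0" using g0 by (simp add: g1_def)
    ultimately show ?thesis using BlochHatI bloch_seminorm_le by blast
  qed
  have "lpn p (\<lambda>i. cmod (lam i) * cmod (cderiv g (zs i))) n
      = lpn p (\<lambda>i. s * (cmod (lam i) * cmod (cderiv g1 (zs i)))) n"
    using zs s by (intro lpn_cong[OF p]) (simp add: g1_deriv norm_mult norm_inverse)
  also have "\<dots> \<le> s * weak_lpn p lam zs n"
    using s weak_lpn_upper[OF p zs \<open>g1 \<in> bloch_ball\<close>] by (simp add: lpn_scale[OF p])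
  finally show ?thesis unfolding s_def .
qed

lemma psum_cond_point_bound:
  assumes p: "1 \<le> p" and f: "psum_cond p f c" and c: "0 \<le> c" and z: "z \<in> disc"
  shows "(1 - (cmod z)\<^sup>2) * norm (cderiv f z) \<le> c"
proof -
  have "norm (cderiv f z) \<le> c * weak_lpn p (\<lambda>i. 1) (\<lambda>i. z) (Suc 0)"
    using f[unfolded psum_cond_iff, rule_format, of "Suc 0" "\<lambda>i. z" "\<lambda>i. 1"] z
    by (simp add: lpn_single[OF p])
  also have "\<dots> \<le> c / (1 - (cmod z)\<^sup>2)"
    using mult_left_mono[OF weak_lpn_single[OF p z] c] by simp
  finally show ?thesis
    using one_minus_norm_sq_pos[OF z] by (simp add: field_simps)
qed

lemma psum_cond_mono:
  assumes p: "1 \<le> p" and f: "psum_cond p f c" and "c \<le> c'"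
  shows "psum_cond p f c'"
  unfolding psum_cond_iff
proof (intro allI impI)
  fix n :: nat and lam zs :: "nat \<Rightarrow> complex" assume zs: "\<forall>i<n. zs i \<in> disc"
  have "lpn p (\<lambda>i. cmod (lam i) * norm (cderiv f (zs i))) n \<le> c * weak_lpn p lam zs n"
    using f zs unfolding psum_cond_iff by blast
  also have "\<dots> \<le> c' * weak_lpn p lam zs n"
    using \<open>c \<le> c'\<close> weak_lpn_nonneg[OF p zs] by (rule mult_right_mono)
  finally show "lpn p (\<lambda>i. cmod (lam i) * norm (cderiv f (zs i))) n \<le> c' * weak_lpn p lam zs n" .
qed

lemma psum_cond_dominated:
  assumes p: "1 \<le> p" and f: "psum_cond p f c" and k: "0 \<le> k"
    and le: "\<And>z. z \<in> disc \<Longrightarrow> norm (cderiv g z) \<le> k * norm (cderiv f z)"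
  shows "psum_cond p g (k * c)"
  unfolding psum_cond_iff
proof (intro allI impI)
  fix n :: nat and lam zs :: "nat \<Rightarrow> complex" assume zs: "\<forall>i<n. zs i \<in> disc"
  have "lpn p (\<lambda>i. cmod (lam i) * norm (cderiv g (zs i))) n
      \<le> lpn p (\<lambda>i. k * (cmod (lam i) * norm (cderiv f (zs i)))) n"
  proof (rule lpn_mono[OF p])
    fix i assume "i < n"
    then have "cmod (lam i) * norm (cderiv g (zs i)) \<le> cmod (lam i) * (k * norm (cderiv f (zs i)))"
      using zs le by (simp add: mult_left_mono)
    then show "\<bar>cmod (lam i) * norm (cderiv g (zs i))\<bar> \<le> \<bar>k * (cmod (lam i) * norm (cderiv f (zs i)))\<bar>"
      using k by (simp add: abs_mult mult.left_commute)
  qed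
  also have "\<dots> \<le> k * (c * weak_lpn p lam zs n)"
    using f zs k unfolding lpn_scale[OF p k] psum_cond_iff by (blast intro: mult_left_mono)
  finally show "lpn p (\<lambda>i. cmod (lam i) * norm (cderiv g (zs i))) n \<le> k * c * weak_lpn p lam zs n"
    by (simp add: mult.assoc)
qed

lemma psum_cond_add:
  assumes p: "1 \<le> p" and f: "psum_cond p f c" and g: "psum_cond p g d"
    and le: "\<And>z. z \<in> disc \<Longrightarrow> norm (cderiv h z) \<le> norm (cderiv f z) + norm (cderiv g z)"
  shows "psum_cond p h (c + d)"
  unfolding psum_cond_iff
proof (intro allI impI)
  fix n :: nat and lam zs :: "nat \<Rightarrow> complex" assume zs: "\<forall>i<n. zs i \<in> disc"
  have "lpn p (\<lambda>i. cmod (lam i) * norm (cderiv h (zs i))) n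
      \<le> lpn p (\<lambda>i. cmod (lam i) * norm (cderiv f (zs i)) + cmod (lam i) * norm (cderiv g (zs i))) n"
    using zs le by (intro lpn_mono[OF p]) (simp add: mult_left_mono distrib_left[symmetric])
  also have "\<dots> \<le> lpn p (\<lambda>i. cmod (lam i) * norm (cderiv f (zs i))) n
                + lpn p (\<lambda>i. cmod (lam i) * norm (cderiv g (zs i))) n"
    by (rule lpn_triangle[OF p])
  also have "\<dots> \<le> c * weak_lpn p lam zs n + d * weak_lpn p lam zs n"
    using f g zs unfolding psum_cond_iff by (blast intro: add_mono)
  finally show "lpn p (\<lambda>i. cmod (lam i) * norm (cderiv h (zs i))) n \<le> (c + d) * weak_lpn p lam zs n"
    by (simp add: distrib_right)
qed

lemma psum_cond_closed:
  assumes p: "1 \<le> p" and all: "\<And>c'. c < c' \<Longrightarrow> psum_cond p f c'"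
  shows "psum_cond p f c"
  unfolding psum_cond_iff
proof (intro allI impI)
  fix n :: nat and lam zs :: "nat \<Rightarrow> complex" assume zs: "\<forall>i<n. zs i \<in> disc"
  define W where "W = weak_lpn p lam zs n"
  have W: "0 \<le> W" unfolding W_def by (rule weak_lpn_nonneg[OF p zs])
  show "lpn p (\<lambda>i. cmod (lam i) * norm (cderiv f (zs i))) n \<le> c * W"
  proof (rule field_le_epsilon)
    fix e :: real assume e: "0 < e"
    have "lpn p (\<lambda>i. cmod (lam i) * norm (cderiv f (zs i))) n \<le> (c + e / (W + 1)) * W"
      using all[of "c + e / (W + 1)"] e W zs unfolding psum_cond_iff W_def by simp
    also have "\<dots> \<le> c * W + e"
      using e W by (simp add: field_simps)
    finally show "lpn p (\<lambda>i. cmod (lam i) * norm (cderiv f (zs i))) n \<le> c * W + e" .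
  qed
qed

lemma piB_least: "0 \<le> c \<Longrightarrow> psum_cond p f c \<Longrightarrow> piB p f \<le> c"
  unfolding piB_def by (rule cInf_lower) (auto intro: bdd_belowI[where m = 0])

lemma piB_nonneg: "f \<in> PiB p \<Longrightarrow> 0 \<le> piB p f"
  unfolding piB_def PiB_def by (rule cInf_greatest) auto

lemma psum_cond_piB:
  assumes p: "1 \<le> p" and f: "f \<in> PiB p"
  shows "psum_cond p f (piB p f)"
proof (rule psum_cond_closed[OF p])
  fix c' assume "piB p f < c'"
  then obtain c where "0 \<le> c" "psum_cond p f c" "c < c'"
    using f unfolding piB_def PiB_def by (subst (asm) cInf_less_iff) (auto intro: bdd_belowI[where m = 0])
  then show "psum_cond p f c'" using psum_cond_mono[OF p, of f c c'] by simp
qed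

lemma
  assumes "vholo f" "f 0 = 0" "0 \<le> c" "psum_cond p f c"
  shows PiBI: "f \<in> PiB p" and piB_le: "piB p f \<le> c"
  using assms piB_least unfolding PiB_def by auto

lemma PiB_cderiv_bound:
  "1 \<le> p \<Longrightarrow> f \<in> PiB p \<Longrightarrow> z \<in> disc \<Longrightarrow> (1 - (cmod z)\<^sup>2) * norm (cderiv f z) \<le> piB p f"
  using psum_cond_point_bound psum_cond_piB piB_nonneg by blast

lemma
  assumes p: "1 \<le> p" and f: "f \<in> PiB p" and "vholo g" "g 0 = 0" "0 \<le> k"
    and "\<And>z. z \<in> disc \<Longrightarrow> norm (cderiv g z) \<le> k * norm (cderiv f z)"
  shows PiB_dominated: "g \<in> PiB p"
    and piB_dominated: "piB p g \<le> k * piB p f"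
proof -
  have "psum_cond p g (k * piB p f)"
    by (rule psum_cond_dominated[OF p psum_cond_piB[OF p f]]) (use assms in auto)
  moreover have "0 \<le> k * piB p f" using assms piB_nonneg[OF f] by simp
  ultimately show "g \<in> PiB p" "piB p g \<le> k * piB p f"
    using PiBI piB_le assms by blast+
qed

lemma
  assumes "1 \<le> p" "f \<in> PiB p"
  shows PiB_BlochHat: "f \<in> BlochHat"
    and bloch_seminorm_le_piB: "bloch_seminorm f \<le> piB p f"
  using assms BlochHatI bloch_seminorm_le PiB_cderiv_bound unfolding PiB_def by blast+

lemma PiB_zero: "1 \<le> p \<Longrightarrow> (\<lambda>z. 0) \<in> PiB p"
  using PiBI[OF vholo_const, of 0 0 p] lpn_zero by (simp add: psum_cond_iff cderiv_const)

lemma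
  assumes p: "1 \<le> p" and f: "f \<in> PiB p" and g: "g \<in> PiB p"
  shows PiB_add: "(\<lambda>z. f z + g z) \<in> PiB p"
    and piB_add: "piB p (\<lambda>z. f z + g z) \<le> piB p f + piB p g"
proof -
  have "vholo f" "vholo g" and "f 0 + g 0 = 0" using f g unfolding PiB_def by auto
  from \<open>vholo f\<close> \<open>vholo g\<close> have "vholo (\<lambda>z. f z + g z)" by (rule vholo_add)
  moreover have "psum_cond p (\<lambda>z. f z + g z) (piB p f + piB p g)"
    using \<open>vholo f\<close> \<open>vholo g\<close>
    by (intro psum_cond_add[OF p psum_cond_piB[OF p f] psum_cond_piB[OF p g]])
       (simp add: cderiv_add norm_triangle_ineq)
  moreover have "0 \<le> piB p f + piB p g" using piB_nonneg[OF f] piB_nonneg[OF g] by simp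
  ultimately show "(\<lambda>z. f z + g z) \<in> PiB p" "piB p (\<lambda>z. f z + g z) \<le> piB p f + piB p g"
    using PiBI piB_le \<open>f 0 + g 0 = 0\<close> by blast+
qed

lemma
  assumes p: "1 \<le> p" and f: "f \<in> PiB p"
  shows PiB_cscale: "(\<lambda>z. a *\<^sub>C f z) \<in> PiB p"
    and piB_cscale: "piB p (\<lambda>z. a *\<^sub>C f z) = cmod a * piB p f"
proof -
  have f_vholo: "vholo f" and "f 0 = 0" using f unfolding PiB_def by auto
  show af: "(\<lambda>z. a *\<^sub>C f z) \<in> PiB p"
    using PiB_dominated[OF p f vholo_cscale[OF f_vholo], where k = "cmod a"] \<open>f 0 = 0\<close>
    by (simp add: cderiv_cscale[OF f_vholo] norm_cscale cscale_right.zero)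
  have "piB p (\<lambda>z. a *\<^sub>C f z) \<le> cmod a * piB p f"
    using piB_dominated[OF p f vholo_cscale[OF f_vholo], where k = "cmod a"] \<open>f 0 = 0\<close>
    by (simp add: cderiv_cscale[OF f_vholo] norm_cscale cscale_right.zero)
  moreover have "cmod a * piB p f \<le> piB p (\<lambda>z. a *\<^sub>C f z)" if "a \<noteq> 0"
  proof -
    have "norm (cderiv f z) \<le> inverse (cmod a) * norm (cderiv (\<lambda>z. a *\<^sub>C f z) z)" if "z \<in> disc" for z
      using \<open>a \<noteq> 0\<close> by (simp add: cderiv_cscale[OF f_vholo that] norm_cscale field_simps)
    then have "piB p f \<le> inverse (cmod a) * piB p (\<lambda>z. a *\<^sub>C f z)"
      by (intro piB_dominated[OF p af f_vholo \<open>f 0 = 0\<close>]) auto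
    then show ?thesis using that by (simp add: field_simps)
  qed
  ultimately show "piB p (\<lambda>z. a *\<^sub>C f z) = cmod a * piB p f"
    using piB_nonneg[OF af] by (cases "a = 0") auto
qed

lemma PiB_diff: "1 \<le> p \<Longrightarrow> f \<in> PiB p \<Longrightarrow> g \<in> PiB p \<Longrightarrow> (\<lambda>z. f z - g z) \<in> PiB p"
  using PiB_add PiB_cscale[of p g "-1"] by (fastforce simp: cscale_left.minus)

lemma piB_eq_0_iff:
  assumes p: "1 \<le> p" and f: "f \<in> PiB p"
  shows "piB p f = 0 \<longleftrightarrow> (\<forall>z\<in>disc. f z = 0)"
proof
  have f_vholo: "vholo f" and "f 0 = 0" using f unfolding PiB_def by auto
  assume "piB p f = 0"
  then have "cderiv f z = 0" if "z \<in> disc" for z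
    using PiB_cderiv_bound[OF p f that] one_minus_norm_sq_pos[OF that] by (simp add: mult_le_0_iff)
  then have "(f has_derivative (\<lambda>h. 0)) (at z within disc)" if "z \<in> disc" for z
    using vholo_has_cderiv[OF f_vholo that] that
    unfolding has_cderiv_def by (simp add: cscale_right.zero has_derivative_at_withinI)
  then obtain c where "\<forall>z\<in>disc. f z = c"
    using has_derivative_zero_constant[of disc f] by auto
  then show "\<forall>z\<in>disc. f z = 0" using \<open>f 0 = 0\<close> by simp
next
  assume "\<forall>z\<in>disc. f z = 0"
  then have "cderiv f z = 0" if "z \<in> disc" for z
    using cderiv_vanishing that by blast
  then have "piB p f \<le> 0 * piB p (\<lambda>z. 0)"
    using f unfolding PiB_def by (intro piB_dominated[OF p PiB_zero[OF p]]) auto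
  then show "piB p f = 0" using piB_nonneg[OF f] by simp
qed

lemma norm_cderiv_rank_one:
  "vholo g \<Longrightarrow> z \<in> disc \<Longrightarrow> norm (cderiv (\<lambda>z. g z *\<^sub>C x) z) = norm x * cmod (cderiv g z)"
  using cderiv_linear[OF _ cbounded_linear_cscale_left[of x]] by (simp add: norm_cscale mult.commute)

lemma psum_cond_rank_one:
  assumes p: "1 \<le> p" and g: "g \<in> BlochHat"
  shows "psum_cond p (\<lambda>z. g z *\<^sub>C x) (bloch_seminorm g * norm x)"
  unfolding psum_cond_iff
proof (intro allI impI)
  fix n :: nat and lam zs :: "nat \<Rightarrow> complex" assume zs: "\<forall>i<n. zs i \<in> disc"
  have g_vholo: "vholo g" using g unfolding BlochHat_def by auto
  have "lpn p (\<lambda>i. cmod (lam i) * norm (cderiv (\<lambda>z. g z *\<^sub>C x) (zs i))) n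
      = lpn p (\<lambda>i. norm x * (cmod (lam i) * cmod (cderiv g (zs i)))) n"
    using zs by (intro lpn_cong[OF p]) (simp add: norm_cderiv_rank_one[OF g_vholo] mult_ac)
  also have "\<dots> = norm x * lpn p (\<lambda>i. cmod (lam i) * cmod (cderiv g (zs i))) n"
    by (simp add: lpn_scale[OF p])
  also have "\<dots> \<le> norm x * (bloch_seminorm g * weak_lpn p lam zs n)"
    by (rule mult_left_mono[OF lpn_le_weak_lpn[OF p zs g]]) simp
  finally show "lpn p (\<lambda>i. cmod (lam i) * norm (cderiv (\<lambda>z. g z *\<^sub>C x) (zs i))) n
      \<le> bloch_seminorm g * norm x * weak_lpn p lam zs n"
    by (simp add: mult_ac)
qed

lemma
  assumes p: "1 \<le> p" and g: "g \<in> BlochHat"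
  shows PiB_rank_one: "(\<lambda>z. g z *\<^sub>C x) \<in> PiB p"
    and piB_rank_one: "piB p (\<lambda>z. g z *\<^sub>C x) = bloch_seminorm g * norm x"
proof -
  have g_vholo: "vholo g" and "g 0 = 0" using g unfolding BlochHat_def by auto
  have gx_vholo: "vholo (\<lambda>z. g z *\<^sub>C x)"
    by (rule vholo_linear[OF g_vholo cbounded_linear_cscale_left[of x]])
  have gx: "(\<lambda>z. g z *\<^sub>C x) \<in> PiB p"
    and le: "piB p (\<lambda>z. g z *\<^sub>C x) \<le> bloch_seminorm g * norm x"
    using PiBI piB_le gx_vholo psum_cond_rank_one[OF p g] \<open>g 0 = 0\<close> bloch_seminorm_nonneg[OF g]
      cscale_left.zero
    by (metis mult_nonneg_nonneg norm_ge_zero)+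
  show "(\<lambda>z. g z *\<^sub>C x) \<in> PiB p" by (rule gx)
  have "bloch_seminorm g * norm x \<le> piB p (\<lambda>z. g z *\<^sub>C x)"
  proof (cases "x = 0")
    case False
    have "(1 - (cmod z)\<^sup>2) * norm (cderiv g z) \<le> piB p (\<lambda>z. g z *\<^sub>C x) / norm x" if "z \<in> disc" for z
      using PiB_cderiv_bound[OF p gx that] norm_cderiv_rank_one[OF g_vholo that, where x = x] False
      by (simp add: pos_le_divide_eq mult_ac)
    then have "bloch_seminorm g \<le> piB p (\<lambda>z. g z *\<^sub>C x) / norm x"
      by (rule bloch_seminorm_le[OF g_vholo \<open>g 0 = 0\<close>])
    then show ?thesis using False by (simp add: pos_le_divide_eq)
  qed (use piB_nonneg[OF gx] in simp)
  with le show "piB p (\<lambda>z. g z *\<^sub>C x) = bloch_seminorm g * norm x" by simp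
qed

section \<open>Composition with self-maps of the disc and with operators\<close>

lemma Moebius_has_field_derivative:
  assumes "1 - cnj b * w \<noteq> 0"
  shows "((\<lambda>w. (w - b) / (1 - cnj b * w)) has_field_derivative (1 - cnj b * b) / (1 - cnj b * w)\<^sup>2) (at w)"
proof -
  have "((\<lambda>w. (w - b) / (1 - cnj b * w)) has_field_derivative
      (1 * (1 - cnj b * w) - (w - b) * (- cnj b)) / ((1 - cnj b * w) * (1 - cnj b * w))) (at w)"
    using assms by (intro DERIV_divide derivative_eq_intros) auto
  then show ?thesis by (simp add: algebra_simps power2_eq_square)
qed

lemma cnj_mult_self_eq: "1 - cnj b * b = of_real (1 - (cmod b)\<^sup>2)"
  by (simp only: complex_norm_square of_real_diff of_real_1 mult.commute)

lemma Moebius_function_deriv_at_centre: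
  assumes "cmod b < 1"
  shows "(Moebius_function 0 b has_field_derivative 1 / of_real (1 - (cmod b)\<^sup>2)) (at b)"
proof -
  have "(cmod b)\<^sup>2 < 1" using assms by (simp add: abs_square_less_1)
  then have "1 - cnj b * b \<noteq> 0" unfolding cnj_mult_self_eq of_real_eq_0_iff by simp
  then have "(Moebius_function 0 b has_field_derivative 1 / (1 - cnj b * b)) (at b)"
    using Moebius_has_field_derivative[of b b]
    unfolding Moebius_function_simple[abs_def] by (simp add: power2_eq_square)
  then show ?thesis unfolding cnj_mult_self_eq .
qed

lemma Moebius_function_deriv_at_0:
  "(Moebius_function 0 (- z) has_field_derivative of_real (1 - (cmod z)\<^sup>2)) (at 0)"
  using Moebius_has_field_derivative[of "- z" 0]
  unfolding Moebius_function_simple[abs_def] cnj_mult_self_eq[symmetric] by simp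

lemma schwarz_pick:
  assumes h: "h holomorphic_on disc" "h ` disc \<subseteq> disc" and z: "z \<in> disc"
  shows "(1 - (cmod z)\<^sup>2) * cmod (deriv h z) \<le> 1 - (cmod (h z))\<^sup>2"
proof -
  define b where "b = h z"
  have b: "cmod b < 1" and z1: "cmod z < 1" using h z by (auto simp: b_def image_subset_iff)
  define \<phi> where "\<phi> = Moebius_function 0 b"
  define \<psi> where "\<psi> = Moebius_function 0 (- z)"
  have \<phi>: "\<phi> holomorphic_on disc" "\<phi> ` disc \<subseteq> disc"
    and \<psi>: "\<psi> holomorphic_on disc" "\<psi> ` disc \<subseteq> disc"
    unfolding \<phi>_def \<psi>_def using b z1 Moebius_function_holomorphic Moebius_function_norm_lt_1
    by auto
  \<comment> \<open>\<open>\<phi> \<circ> h \<circ> \<psi>\<close> fixes \<open>0\<close>, so the Schwarz lemma bounds its derivative there\<close>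
  define G where "G w = \<phi> (h (\<psi> w))" for w
  have \<psi>0: "\<psi> 0 = z" by (simp add: \<psi>_def Moebius_function_simple)
  have "G holomorphic_on disc"
    unfolding G_def using \<phi> \<psi> h
    by (intro holomorphic_on_compose_gen[OF \<psi>(1) holomorphic_on_compose_gen[OF h(1) \<phi>(1)],
        unfolded comp_def]) auto
  moreover have "G 0 = 0" by (simp add: G_def \<psi>0 \<phi>_def b_def Moebius_function_eq_zero)
  moreover have "cmod (G w) < 1" if "cmod w < 1" for w
    using that \<phi>(2) \<psi>(2) h(2) unfolding G_def by (auto simp: image_subset_iff)
  ultimately have G'0: "cmod (deriv G 0) \<le> 1"
    using Schwarz_Lemma(2)[of G 0] by simp
  have pos: "0 < 1 - (cmod b)\<^sup>2" "0 < 1 - (cmod z)\<^sup>2"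
    using b z1 by (simp_all add: abs_square_less_1)
  have dh: "(h has_field_derivative deriv h z) (at (\<psi> 0))"
    unfolding \<psi>0 using h(1) z by (rule holomorphic_derivI[OF _ open_ball])
  have d\<phi>: "(\<phi> has_field_derivative 1 / of_real (1 - (cmod b)\<^sup>2)) (at (h (\<psi> 0)))"
    unfolding \<phi>_def \<psi>0 b_def[symmetric] by (rule Moebius_function_deriv_at_centre[OF b])
  have d\<psi>: "(\<psi> has_field_derivative of_real (1 - (cmod z)\<^sup>2)) (at 0)"
    unfolding \<psi>_def by (rule Moebius_function_deriv_at_0)
  have "(G has_field_derivative
      1 / of_real (1 - (cmod b)\<^sup>2) * (deriv h z * of_real (1 - (cmod z)\<^sup>2))) (at 0)"
    unfolding G_def using DERIV_chain2[OF d\<phi> DERIV_chain2[OF dh d\<psi>]] .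
  then have dG: "deriv G 0 = deriv h z * of_real ((1 - (cmod z)\<^sup>2) / (1 - (cmod b)\<^sup>2))"
    by (simp add: DERIV_imp_deriv field_simps)
  have "cmod (deriv G 0) = cmod (deriv h z) * ((1 - (cmod z)\<^sup>2) / (1 - (cmod b)\<^sup>2))"
    unfolding dG norm_mult norm_of_real using pos by simp
  then have "cmod (deriv h z) * ((1 - (cmod z)\<^sup>2) / (1 - (cmod b)\<^sup>2)) \<le> 1"
    using G'0 by simp
  then show ?thesis
    using pos by (simp add: b_def field_simps mult.commute)
qed

lemma bloch_ball_comp:
  assumes g: "g \<in> bloch_ball"
    and h: "h holomorphic_on disc" "h ` disc \<subseteq> disc" "h 0 = 0"
  shows "(\<lambda>w. g (h w)) \<in> bloch_ball"
proof -
  have g_vholo: "vholo g" and "g 0 = 0" using g unfolding BlochHat_def by auto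
  have v: "vholo (\<lambda>w. g (h w))" by (rule vholo_comp[OF g_vholo h(1,2)])
  have gh0: "g (h 0) = 0" using \<open>g 0 = 0\<close> h(3) by simp
  have bound: "(1 - (cmod z)\<^sup>2) * norm (cderiv (\<lambda>w. g (h w)) z) \<le> 1" if z: "z \<in> disc" for z
  proof -
    have hz: "h z \<in> disc" using h(2) z by blast
    have "(1 - (cmod z)\<^sup>2) * norm (cderiv (\<lambda>w. g (h w)) z)
        = ((1 - (cmod z)\<^sup>2) * cmod (deriv h z)) * cmod (cderiv g (h z))"
      by (simp add: cderiv_comp[OF g_vholo h(1,2) z] norm_mult)
    also have "\<dots> \<le> (1 - (cmod (h z))\<^sup>2) * cmod (cderiv g (h z))"
      by (rule mult_right_mono[OF schwarz_pick[OF h(1,2) z]]) simp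
    also have "\<dots> \<le> 1"
      using bloch_seminorm_upper[of g "h z"] g hz by simp
    finally show ?thesis .
  qed
  show ?thesis using BlochHatI[OF v gh0 bound] bloch_seminorm_le[OF v gh0 bound] by simp
qed

lemma weak_lpn_comp:
  assumes p: "1 \<le> p" and zs: "\<forall>i<n. zs i \<in> disc"
    and h: "h holomorphic_on disc" "h ` disc \<subseteq> disc" "h 0 = 0"
  shows "weak_lpn p (\<lambda>i. lam i * deriv h (zs i)) (\<lambda>i. h (zs i)) n \<le> weak_lpn p lam zs n"
proof (rule weak_lpn_least)
  fix g assume g: "g \<in> bloch_ball"
  then have g_vholo: "vholo g" by (simp add: BlochHat_def)
  have "lpn p (\<lambda>i. cmod (lam i * deriv h (zs i)) * cmod (cderiv g (h (zs i)))) n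
      = lpn p (\<lambda>i. cmod (lam i) * cmod (cderiv (\<lambda>w. g (h w)) (zs i))) n"
    using zs by (intro lpn_cong[OF p]) (simp add: cderiv_comp[OF g_vholo h(1,2)] norm_mult)
  also have "\<dots> \<le> weak_lpn p lam zs n"
    by (rule weak_lpn_upper[OF p zs bloch_ball_comp[OF g h]])
  finally show "lpn p (\<lambda>i. cmod (lam i * deriv h (zs i)) * cmod (cderiv g (h (zs i)))) n
      \<le> weak_lpn p lam zs n" .
qed

lemma norm_cderiv_comp_le:
  assumes f: "vholo f" and T: "cbounded_linear T"
    and h: "h holomorphic_on disc" "h ` disc \<subseteq> disc" and z: "z \<in> disc"
  shows "norm (cderiv (\<lambda>w. T (f (h w))) z) \<le> onorm T * (cmod (deriv h z) * norm (cderiv f (h z)))"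
proof -
  have "norm (cderiv (\<lambda>w. T (f (h w))) z) = cmod (deriv h z) * norm (T (cderiv f (h z)))"
    using h(2) z
    by (simp add: cderiv_comp[OF vholo_linear[OF f T] h z] cderiv_linear[OF f T] image_subset_iff
        norm_cscale)
  also have "\<dots> \<le> cmod (deriv h z) * (onorm T * norm (cderiv f (h z)))"
    using T unfolding cbounded_linear_def by (intro mult_left_mono onorm) auto
  finally show ?thesis by (simp add: mult_ac)
qed

lemma psum_cond_comp:
  assumes p: "1 \<le> p" and f: "vholo f" "psum_cond p f c" "0 \<le> c" and T: "cbounded_linear T"
    and h: "h holomorphic_on disc" "h ` disc \<subseteq> disc" "h 0 = 0"
  shows "psum_cond p (\<lambda>w. T (f (h w))) (onorm T * c)"
  unfolding psum_cond_iff
proof (intro allI impI)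
  fix n :: nat and lam zs :: "nat \<Rightarrow> complex" assume zs: "\<forall>i<n. zs i \<in> disc"
  have T_bl: "bounded_linear T" using T unfolding cbounded_linear_def by simp
  note T0 = onorm_pos_le[OF T_bl]
  have hzs: "\<forall>i<n. h (zs i) \<in> disc" using zs h(2) by blast
  \<comment> \<open>the family \<open>(\<lambda>\<^sub>i, z\<^sub>i)\<close> for \<open>T \<circ> f \<circ> h\<close> becomes \<open>(\<lambda>\<^sub>i h'(z\<^sub>i), h(z\<^sub>i))\<close> for \<open>f\<close>\<close>
  have "lpn p (\<lambda>i. cmod (lam i) * norm (cderiv (\<lambda>w. T (f (h w))) (zs i))) n
      \<le> lpn p (\<lambda>i. onorm T * (cmod (lam i * deriv h (zs i)) * norm (cderiv f (h (zs i))))) n"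
  proof (rule lpn_mono[OF p])
    fix i assume "i < n"
    then show "\<bar>cmod (lam i) * norm (cderiv (\<lambda>w. T (f (h w))) (zs i))\<bar>
        \<le> \<bar>onorm T * (cmod (lam i * deriv h (zs i)) * norm (cderiv f (h (zs i))))\<bar>"
      using mult_left_mono[OF norm_cderiv_comp_le[OF f(1) T h(1,2)], of "zs i" "cmod (lam i)"] zs T0
      by (simp add: norm_mult mult_ac)
  qed
  also have "\<dots> \<le> onorm T * (c * weak_lpn p (\<lambda>i. lam i * deriv h (zs i)) (\<lambda>i. h (zs i)) n)"
    unfolding lpn_scale[OF p T0]
    by (rule mult_left_mono[OF _ T0])
       (rule f(2)[unfolded psum_cond_iff, rule_format, OF hzs[rule_format]])
  also have "\<dots> \<le> onorm T * (c * weak_lpn p lam zs n)"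
    using weak_lpn_comp[OF p zs h] T0 f(3) by (intro mult_left_mono) auto
  finally show "lpn p (\<lambda>i. cmod (lam i) * norm (cderiv (\<lambda>w. T (f (h w))) (zs i))) n
      \<le> onorm T * c * weak_lpn p lam zs n"
    by (simp add: mult.assoc)
qed

lemma
  assumes p: "1 \<le> p" and f: "f \<in> PiB p" and T: "cbounded_linear T"
    and h: "h holomorphic_on disc" "h ` disc \<subseteq> disc" "h 0 = 0"
  shows PiB_comp: "T \<circ> f \<circ> h \<in> PiB p"
    and piB_comp: "piB p (T \<circ> f \<circ> h) \<le> onorm T * piB p f"
proof -
  have f_vholo: "vholo f" and "f 0 = 0" using f unfolding PiB_def by auto
  have T_bl: "bounded_linear T" using T unfolding cbounded_linear_def by simp
  have "vholo (\<lambda>w. T (f (h w)))"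
    by (rule vholo_comp[OF vholo_linear[OF f_vholo T] h(1,2)])
  moreover have "T (f (h 0)) = 0" using \<open>f 0 = 0\<close> h(3) T_bl by (simp add: linear_simps)
  moreover have "0 \<le> onorm T * piB p f" using onorm_pos_le[OF T_bl] piB_nonneg[OF f] by simp
  moreover note psum_cond_comp[OF p f_vholo psum_cond_piB[OF p f] piB_nonneg[OF f] T h]
  ultimately show "T \<circ> f \<circ> h \<in> PiB p" "piB p (T \<circ> f \<circ> h) \<le> onorm T * piB p f"
    unfolding comp_def using PiBI piB_le by blast+
qed

lemma
  assumes p: "1 \<le> p" and f: "f \<in> BlochHat"
    and \<iota>: "cbounded_linear \<iota>" "\<And>x. norm (\<iota> x) = norm x" and \<iota>f: "\<iota> \<circ> f \<in> PiB p"
  shows PiB_isometry_comp: "f \<in> PiB p"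
    and piB_isometry_comp: "piB p f = piB p (\<iota> \<circ> f)"
proof -
  have f_vholo: "vholo f" and "f 0 = 0" using f unfolding BlochHat_def by auto
  have \<iota>f_eq: "\<iota> \<circ> f = (\<lambda>w. \<iota> (f w))" by (simp add: comp_def)
  have norm_eq: "norm (cderiv (\<lambda>w. \<iota> (f w)) z) = norm (cderiv f z)" if "z \<in> disc" for z
    using cderiv_linear[OF f_vholo \<iota>(1) that] \<iota>(2) by simp
  then have fP: "f \<in> PiB p"
    and le: "piB p f \<le> piB p (\<iota> \<circ> f)"
    using PiB_dominated[OF p \<iota>f, of f 1] piB_dominated[OF p \<iota>f, of f 1] f_vholo \<open>f 0 = 0\<close>
    unfolding \<iota>f_eq by simp_all
  have "piB p (\<lambda>w. \<iota> (f w)) \<le> 1 * piB p f"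
    using \<iota>f norm_eq unfolding \<iota>f_eq PiB_def
    by (intro piB_dominated[OF p fP]) auto
  with le show "piB p f = piB p (\<iota> \<circ> f)" unfolding \<iota>f_eq by simp
  show "f \<in> PiB p" by (rule fP)
qed

section \<open>Completeness\<close>

lemma psum_cond_limit:
  assumes p: "1 \<le> p"
    and lim: "\<And>z. z \<in> disc \<Longrightarrow> (\<lambda>m. cderiv (g m) z) \<longlonglongrightarrow> cderiv f z"
    and ev: "\<forall>\<^sub>F m in sequentially. psum_cond p (g m) c"
  shows "psum_cond p f c"
  unfolding psum_cond_iff
proof (intro allI impI)
  fix n :: nat and lam zs :: "nat \<Rightarrow> complex" assume zs: "\<forall>i<n. zs i \<in> disc"
  define L where "L = lpn p (\<lambda>i. cmod (lam i)) n"
  have L: "0 \<le> L" unfolding L_def by (rule lpn_nonneg)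
  show "lpn p (\<lambda>i. cmod (lam i) * norm (cderiv f (zs i))) n \<le> c * weak_lpn p lam zs n"
  proof (rule field_le_epsilon)
    fix e :: real assume e: "0 < e"
    define d where "d = e / (L + 1)"
    have d: "0 < d" "d * L \<le> e" unfolding d_def using e L by (auto simp: field_simps)
    have "\<forall>\<^sub>F m in sequentially. \<forall>i\<in>{..<n}. dist (cderiv (g m) (zs i)) (cderiv f (zs i)) < d"
      using zs lim d(1) by (intro eventually_ball_finite ballI) (auto simp: tendsto_iff)
    with ev have "\<exists>m. psum_cond p (g m) c \<and> (\<forall>i\<in>{..<n}. dist (cderiv (g m) (zs i)) (cderiv f (zs i)) < d)"
      by (intro eventually_happens'[OF sequentially_bot] eventually_conj)
    then obtain m where gm: "psum_cond p (g m) c"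
      and close: "\<forall>i<n. norm (cderiv (g m) (zs i) - cderiv f (zs i)) < d"
      by (auto simp: dist_norm)
    have "lpn p (\<lambda>i. cmod (lam i) * norm (cderiv f (zs i))) n
        \<le> lpn p (\<lambda>i. cmod (lam i) * norm (cderiv (g m) (zs i))) n + d * L"
      unfolding L_def
    proof (rule lpn_le_add_scaled[OF p less_imp_le[OF d(1)]])
      fix i assume "i < n"
      then have "norm (cderiv f (zs i)) \<le> norm (cderiv (g m) (zs i)) + d"
        using close norm_triangle_sub[of "cderiv f (zs i)" "cderiv (g m) (zs i)"]
        by (fastforce simp: norm_minus_commute)
      then have "cmod (lam i) * norm (cderiv f (zs i)) \<le> cmod (lam i) * (norm (cderiv (g m) (zs i)) + d)"
        by (rule mult_left_mono) simp
      then show "\<bar>cmod (lam i) * norm (cderiv f (zs i))\<bar>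
          \<le> \<bar>cmod (lam i) * norm (cderiv (g m) (zs i))\<bar> + d * \<bar>cmod (lam i)\<bar>"
        by (simp add: algebra_simps)
    qed
    also have "\<dots> \<le> c * weak_lpn p lam zs n + e"
      using gm zs d(2) unfolding psum_cond_iff by (blast intro: add_mono)
    finally show "lpn p (\<lambda>i. cmod (lam i) * norm (cderiv f (zs i))) n \<le> c * weak_lpn p lam zs n + e" .
  qed
qed

lemma PiB_limit:
  assumes p: "1 \<le> p" and f: "vholo f" "f 0 = 0" and c: "0 \<le> c"
    and lim: "\<And>z. z \<in> disc \<Longrightarrow> (\<lambda>m. cderiv (g m) z) \<longlonglongrightarrow> cderiv f z"
    and ev: "\<forall>\<^sub>F m in sequentially. g m \<in> PiB p \<and> piB p (g m) \<le> c"
  shows "f \<in> PiB p \<and> piB p f \<le> c"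
proof -
  have "\<forall>\<^sub>F m in sequentially. psum_cond p (g m) c"
    using ev by eventually_elim (blast intro: psum_cond_mono[OF p psum_cond_piB[OF p]])
  then have "psum_cond p f c" using psum_cond_limit[OF p lim] by blast
  then show ?thesis using PiBI piB_le f c by blast
qed

lemma PiB_Cauchy_uniformly_Cauchy:
  assumes p: "1 \<le> p" and s: "\<And>n. s n \<in> PiB p"
    and cauchy: "\<And>e. e > 0 \<Longrightarrow> \<exists>N. \<forall>m\<ge>N. \<forall>n\<ge>N. piB p (\<lambda>z. s m z - s n z) < e"
    and r: "0 \<le> r" "r < 1"
  shows "uniformly_Cauchy_on (ball 0 r) (\<lambda>n. cderiv (s n))"
  unfolding uniformly_Cauchy_on_def
proof (intro allI impI)
  fix e :: real assume e: "0 < e"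
  have r2: "0 < 1 - r\<^sup>2" using r by (simp add: power_less_one_iff abs_square_less_1)
  obtain N where N: "\<forall>m\<ge>N. \<forall>n\<ge>N. piB p (\<lambda>z. s m z - s n z) < e * (1 - r\<^sup>2)"
    using cauchy[of "e * (1 - r\<^sup>2)"] e r2 by auto
  have "dist (cderiv (s m) x) (cderiv (s n) x) < e" if "x \<in> ball 0 r" "N \<le> m" "N \<le> n" for x m n
  proof -
    have x: "x \<in> disc" and rx: "1 - r\<^sup>2 \<le> 1 - (cmod x)\<^sup>2"
      using that r by (auto intro: power_mono)
    have sm: "vholo (s m)" and sn: "vholo (s n)" using s unfolding PiB_def by auto
    have "(1 - (cmod x)\<^sup>2) * dist (cderiv (s m) x) (cderiv (s n) x) \<le> piB p (\<lambda>z. s m z - s n z)"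
      using PiB_cderiv_bound[OF p PiB_diff[OF p s[of m] s[of n]] x]
      by (simp add: dist_norm cderiv_diff[OF sm sn x])
    also have "\<dots> < e * (1 - r\<^sup>2)" using N that by blast
    also have "\<dots> \<le> e * (1 - (cmod x)\<^sup>2)" using rx e by simp
    finally show ?thesis using one_minus_norm_sq_pos[OF x] by (simp add: mult.commute)
  qed
  then show "\<exists>M. \<forall>x\<in>ball 0 r. \<forall>m\<ge>M. \<forall>n\<ge>M. dist (cderiv (s m) x) (cderiv (s n) x) < e"
    by blast
qed

lemma uniform_limit_cscale_bound:
  fixes D :: "nat \<Rightarrow> 'b \<Rightarrow> 'a::complex_banach"
  assumes "uniform_limit S D l sequentially" "0 < e"
  shows "\<forall>\<^sub>F n in sequentially. \<forall>x\<in>S. \<forall>h. norm (h *\<^sub>C D n x - h *\<^sub>C l x) \<le> e * norm h"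
proof (rule eventually_mono)
  show "\<forall>\<^sub>F n in sequentially. \<forall>x\<in>S. dist (D n x) (l x) < e"
    using assms unfolding uniform_limit_iff by blast
  fix n assume close: "\<forall>x\<in>S. dist (D n x) (l x) < e"
  show "\<forall>x\<in>S. \<forall>h. norm (h *\<^sub>C D n x - h *\<^sub>C l x) \<le> e * norm h"
  proof (intro ballI allI)
    fix x h assume "x \<in> S"
    then have "cmod h * norm (D n x - l x) \<le> cmod h * e"
      using close by (intro mult_left_mono) (auto simp: dist_norm less_imp_le)
    then show "norm (h *\<^sub>C D n x - h *\<^sub>C l x) \<le> e * norm h"
      by (simp add: cscale_right.diff[symmetric] norm_cscale mult.commute)
  qed
qed

lemma has_cderiv_uniform_limit:
  fixes s :: "nat \<Rightarrow> complex \<Rightarrow> 'a::complex_banach"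
  assumes s: "\<And>n. vholo (s n)" "\<And>n. s n 0 = 0" and r: "r \<le> 1"
    and unif: "uniform_limit (ball 0 r) (\<lambda>n. cderiv (s n)) l sequentially"
    and z: "z \<in> ball 0 r"
  shows "has_cderiv (\<lambda>w. lim (\<lambda>n. s n w)) (l z) z"
proof -
  have ball_disc: "ball 0 r \<subseteq> disc" using r by auto
  have "\<exists>g. \<forall>x\<in>ball 0 r. (\<lambda>n. s n x) \<longlonglongrightarrow> g x \<and>
      (g has_derivative (\<lambda>h. h *\<^sub>C l x)) (at x within ball 0 r)"
  proof (rule has_derivative_sequence[where f' = "\<lambda>n x h. h *\<^sub>C cderiv (s n) x"])
    show "(s n has_derivative (\<lambda>h. h *\<^sub>C cderiv (s n) x)) (at x within ball 0 r)"
      if "x \<in> ball 0 r" for n x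
      using vholo_has_cderiv[OF s(1)] that ball_disc
      unfolding has_cderiv_def by (blast intro: has_derivative_at_withinI)
    show "\<forall>\<^sub>F n in sequentially. \<forall>x\<in>ball 0 r. \<forall>h. norm (h *\<^sub>C cderiv (s n) x - h *\<^sub>C l x) \<le> e * norm h"
      if "e > 0" for e
      using uniform_limit_cscale_bound[OF unif that] .
    show "(\<lambda>n. s n 0) \<longlonglongrightarrow> 0" by (simp add: s(2))
  qed (use z in \<open>auto intro: le_less_trans[OF norm_ge_zero]\<close>)
  then obtain g where g: "\<And>x. x \<in> ball 0 r \<Longrightarrow> (\<lambda>n. s n x) \<longlonglongrightarrow> g x"
    and g': "\<And>x. x \<in> ball 0 r \<Longrightarrow> (g has_derivative (\<lambda>h. h *\<^sub>C l x)) (at x within ball 0 r)"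
    by blast
  have "(g has_derivative (\<lambda>h. h *\<^sub>C l z)) (at z)"
    using g'[OF z] at_within_open[OF z open_ball] by simp
  then show ?thesis
    unfolding has_cderiv_def
    by (rule has_derivative_transform_within_open[OF _ open_ball z]) (use g limI in metis)
qed

lemma
  fixes s :: "nat \<Rightarrow> complex \<Rightarrow> 'a::complex_banach"
  assumes s: "\<And>n. vholo (s n)" "\<And>n. s n 0 = 0"
    and cauchy: "\<And>r. 0 \<le> r \<Longrightarrow> r < 1 \<Longrightarrow> uniformly_Cauchy_on (ball 0 r) (\<lambda>n. cderiv (s n))"
  defines "F \<equiv> \<lambda>w. lim (\<lambda>n. s n w)"
  shows vholo_lim: "vholo F"
    and cderiv_lim: "z \<in> disc \<Longrightarrow> (\<lambda>n. cderiv (s n) z) \<longlonglongrightarrow> cderiv F z"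
proof -
  have "\<exists>d. has_cderiv F d z \<and> (\<lambda>n. cderiv (s n) z) \<longlonglongrightarrow> d" if z: "z \<in> disc" for z
  proof -
    define r where "r = (1 + cmod z) / 2"
    have r: "0 \<le> r" "r < 1" "z \<in> ball 0 r" using z by (auto simp: r_def)
    obtain l where "uniform_limit (ball 0 r) (\<lambda>n. cderiv (s n)) l sequentially"
      using Cauchy_uniformly_convergent[OF cauchy[OF r(1,2)]]
      unfolding uniformly_convergent_on_def by blast
    then show ?thesis unfolding F_def
      using has_cderiv_uniform_limit[OF s _ _ r(3)] tendsto_uniform_limitI r by fastforce
  qed
  then show "vholo F" "z \<in> disc \<Longrightarrow> (\<lambda>n. cderiv (s n) z) \<longlonglongrightarrow> cderiv F z"
    unfolding vholo_def by (metis cderiv_eq)+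
qed

lemma PiB_complete:
  fixes s :: "nat \<Rightarrow> complex \<Rightarrow> 'a::complex_banach"
  assumes p: "1 \<le> p" and s: "\<And>n. s n \<in> PiB p"
    and cauchy: "\<And>e. e > 0 \<Longrightarrow> \<exists>N. \<forall>m\<ge>N. \<forall>n\<ge>N. piB p (\<lambda>z. s m z - s n z) < e"
  shows "\<exists>f\<in>PiB p. \<forall>e>0. \<exists>N. \<forall>n\<ge>N. piB p (\<lambda>z. s n z - f z) < e"
proof -
  have s_vholo: "vholo (s n)" and s0: "s n 0 = 0" for n using s unfolding PiB_def by auto
  define F where "F w = lim (\<lambda>n. s n w)" for w
  note unif = PiB_Cauchy_uniformly_Cauchy[OF p s cauchy]
  have F_vholo: "vholo F" and "F 0 = 0"
    and F_deriv: "\<And>z. z \<in> disc \<Longrightarrow> (\<lambda>n. cderiv (s n) z) \<longlonglongrightarrow> cderiv F z"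
    unfolding F_def[abs_def] using vholo_lim[OF s_vholo s0 unif] cderiv_lim[OF s_vholo s0 unif]
    by (auto simp: s0)
  have tail: "(\<lambda>z. s k z - F z) \<in> PiB p \<and> piB p (\<lambda>z. s k z - F z) \<le> e"
    if e: "0 \<le> e" and N: "\<forall>m\<ge>N. \<forall>n\<ge>N. piB p (\<lambda>z. s m z - s n z) < e" and k: "N \<le> k" for e N k
  proof (rule PiB_limit[OF p vholo_diff[OF s_vholo F_vholo] _ e])
    show "(\<lambda>m. cderiv (\<lambda>z. s k z - s m z) z) \<longlonglongrightarrow> cderiv (\<lambda>z. s k z - F z) z"
      if z: "z \<in> disc" for z
      using tendsto_diff[OF tendsto_const F_deriv[OF z]]
      by (simp add: cderiv_diff[OF s_vholo s_vholo z] cderiv_diff[OF s_vholo F_vholo z])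
    show "\<forall>\<^sub>F m in sequentially. (\<lambda>z. s k z - s m z) \<in> PiB p \<and> piB p (\<lambda>z. s k z - s m z) \<le> e"
      unfolding eventually_sequentially using PiB_diff[OF p s s] N k by (meson less_imp_le order_trans)
  qed (simp add: s0 \<open>F 0 = 0\<close>)
  obtain N where "\<forall>m\<ge>N. \<forall>n\<ge>N. piB p (\<lambda>z. s m z - s n z) < 1" using cauchy[of 1] by auto
  then have "(\<lambda>z. s N z - F z) \<in> PiB p" using tail[of 1 N N] by simp
  from PiB_diff[OF p s[of N] this] have "F \<in> PiB p" by simp
  moreover have "\<exists>N. \<forall>n\<ge>N. piB p (\<lambda>z. s n z - F z) < e" if "e > 0" for e
  proof -
    obtain N where "\<forall>m\<ge>N. \<forall>n\<ge>N. piB p (\<lambda>z. s m z - s n z) < e / 2"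
      using cauchy[of "e / 2"] \<open>e > 0\<close> by auto
    then show ?thesis using tail[of "e / 2" N] \<open>e > 0\<close> by force
  qed
  ultimately show ?thesis by blast
qed

lemma banach_bloch_ideal_on_PiB:
  assumes "1 \<le> p"
  shows "banach_bloch_ideal_on (PiB p) (piB p)"
  unfolding banach_bloch_ideal_on_def
proof (intro conjI ballI allI impI subsetI)
  fix s :: "nat \<Rightarrow> complex \<Rightarrow> 'a"
  assume "(\<forall>n. s n \<in> PiB p) \<and> (\<forall>e>0. \<exists>N. \<forall>m\<ge>N. \<forall>n\<ge>N. piB p (\<lambda>z. s m z - s n z) < e)"
  then show "\<exists>f\<in>PiB p. \<forall>e>0. \<exists>N. \<forall>n\<ge>N. piB p (\<lambda>z. s n z - f z) < e"
    using PiB_complete[OF assms, of s] by blast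
qed (simp_all add: assms PiB_BlochHat[OF assms] PiB_zero PiB_add PiB_cscale PiB_rank_one
  piB_eq_0_iff piB_add piB_cscale bloch_seminorm_le_piB piB_rank_one)

lemma bloch_ideal_compose_PiB:
  assumes "1 \<le> p"
  shows "bloch_ideal_compose (PiB p) (piB p) (PiB p) (piB p)"
  unfolding bloch_ideal_compose_def
  by (intro ballI allI impI) (simp add: PiB_comp[OF assms] piB_comp[OF assms])

lemma bloch_ideal_injective_PiB:
  assumes "1 \<le> p"
  shows "bloch_ideal_injective (PiB p) (piB p) (PiB p) (piB p)"
  unfolding bloch_ideal_injective_def
proof (intro ballI allI impI, elim conjE)
  fix f \<iota> assume "f \<in> BlochHat" "cbounded_linear \<iota>" "\<forall>x. norm (\<iota> x) = norm x" "\<iota> \<circ> f \<in> PiB p"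
  note hyps = this(1,2) this(3)[rule_format] this(4)
  show "f \<in> PiB p \<and> piB p f = piB p (\<iota> \<circ> f)"
    using PiB_isometry_comp[OF assms hyps] piB_isometry_comp[OF assms hyps] by blast
qed

theorem proposition1p2:
  fixes p :: ereal
  assumes "1 \<le> p"
  shows "banach_bloch_ideal_on (PiB p :: (complex \<Rightarrow> 'a::complex_banach) set) (piB p)
       \<and> bloch_ideal_compose (PiB p :: (complex \<Rightarrow> 'a) set) (piB p)
                             (PiB p :: (complex \<Rightarrow> 'b::complex_banach) set) (piB p)
       \<and> bloch_ideal_injective (PiB p :: (complex \<Rightarrow> 'a) set) (piB p)
                               (PiB p :: (complex \<Rightarrow> 'b) set) (piB p)"
  using banach_bloch_ideal_on_PiB[OF assms] bloch_ideal_compose_PiB[OF assms]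
    bloch_ideal_injective_PiB[OF assms] by blast

end
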